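(* Let $\varepsilon>0$, $t\ge3$, and let $\mathcal A\ne\vec0$ be a super-assignment over $\mathbf{PL}(\mathbb F^t)$ with degree bound $d$ (an integer $\mathcal A_{\mathcal P}[f]$ for each affine plane $\mathcal P$ and each $f\in\mathcal P_{\le d}$). Suppose $\mathcal A$ satisfies the weak Plane-vs-Plane constraints and $|\mathrm{supp}(\mathcal P)|\le|\mathbb F|^{\varepsilon}$ for every plane $\mathcal P$. Then the fraction of planes $\mathcal P\in\mathbf{PL}(\mathbb F^t)$ with $\mathcal A_{\mathcal P}=\vec0$ is at most $(d+3)|\mathbb F|^{-1+\varepsilon}$.
   Context: $\mathbf{PL}(\mathbb F^t)$ is the set of affine planes of $\mathbb F^t$. For a plane $\mathcal P=\alpha+\mathrm{Span}(x,y)$, $\mathcal P_{\le d}$ is the set of functions $\mathcal P\to\mathbb F$ that are polynomials of total degree at most $d$ in the affine coordinates of $\mathcal P$. $\mathcal A_{\mathcal P}$ denotes the vector $(\mathcal A_{\mathcal P}[f])_{f\in\mathcal P_{\le d}}$, and $\mathrm{supp}(\mathcal P)=\{f:\mathcal A_{\mathcal P}[f]\ne0\}$. Weak Plane-vs-Plane constraints: for every two planes $\mathcal P_1,\mathcal P_2$ intersecting in an affine line $\ell$, every $x\in\ell$ and every $a\in\mathbb F$, $\sum_{f\in(\mathcal P_1)_{\le d}:f(x)=a}\mathcal A_{\mathcal P_1}[f]=\sum_{f\in(\mathcal P_2)_{\le d}:f(x)=a}\mathcal A_{\mathcal P_2}[f]$. *)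

theory Defs
  imports Complex_Main
begin

text \<open>Points of F^t are functions 'n \<Rightarrow> 'a with 'n a finite index type, CARD('n) = t.\<close>

definition indep2 :: "('n \<Rightarrow> 'a::field) \<Rightarrow> ('n \<Rightarrow> 'a) \<Rightarrow> bool" where
  "indep2 x y \<longleftrightarrow> (\<forall>a b. (\<forall>i. a * x i + b * y i = 0) \<longrightarrow> a = 0 \<and> b = 0)"

definition plane_of :: "('n \<Rightarrow> 'a::field) \<Rightarrow> ('n \<Rightarrow> 'a) \<Rightarrow> ('n \<Rightarrow> 'a) \<Rightarrow> ('n \<Rightarrow> 'a) set" where
  "plane_of \<alpha> x y = {(\<lambda>i. \<alpha> i + a * x i + b * y i) | a b. True}"

definition affine_planes :: "('n \<Rightarrow> 'a::field) set set" where
  "affine_planes = {P. \<exists>\<alpha> x y. indep2 x y \<and> P = plane_of \<alpha> x y}"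

definition is_affine_line :: "('n \<Rightarrow> 'a::field) set \<Rightarrow> bool" where
  "is_affine_line L \<longleftrightarrow> (\<exists>\<alpha> x. (\<exists>i. x i \<noteq> 0) \<and> L = {(\<lambda>i. \<alpha> i + a * x i) | a. True})"

text \<open>P_{<=d}: functions on the plane P (extended by 0 outside P) that are polynomials of total
 degree at most d in affine coordinates of P.\<close>
definition low_deg :: "nat \<Rightarrow> ('n \<Rightarrow> 'a::field) set \<Rightarrow> (('n \<Rightarrow> 'a) \<Rightarrow> 'a) set" where
  "low_deg d P = {f. (\<exists>\<alpha> x y c. indep2 x y \<and> P = plane_of \<alpha> x y
      \<and> (\<forall>i j. d < i + j \<longrightarrow> c i j = 0)
      \<and> (\<forall>a b. f (\<lambda>i. \<alpha> i + a * x i + b * y i) = (\<Sum>i\<le>d. \<Sum>j\<le>d. c i j * a ^ i * b ^ j)))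
      \<and> (\<forall>v. v \<notin> P \<longrightarrow> f v = 0)}"

definition supp :: "nat \<Rightarrow> (('n \<Rightarrow> 'a::field) set \<Rightarrow> (('n \<Rightarrow> 'a) \<Rightarrow> 'a) \<Rightarrow> int) \<Rightarrow> ('n \<Rightarrow> 'a) set \<Rightarrow> (('n \<Rightarrow> 'a) \<Rightarrow> 'a) set" where
  "supp d A P = {f \<in> low_deg d P. A P f \<noteq> 0}"

definition weak_PvP :: "nat \<Rightarrow> (('n \<Rightarrow> 'a::field) set \<Rightarrow> (('n \<Rightarrow> 'a) \<Rightarrow> 'a) \<Rightarrow> int) \<Rightarrow> bool" where
  "weak_PvP d A \<longleftrightarrow> (\<forall>P1 \<in> affine_planes. \<forall>P2 \<in> affine_planes. is_affine_line (P1 \<inter> P2) \<longrightarrow>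
     (\<forall>x \<in> P1 \<inter> P2. \<forall>a.
        (\<Sum>f \<in> {f \<in> low_deg d P1. f x = a}. A P1 f) = (\<Sum>f \<in> {f \<in> low_deg d P2. f x = a}. A P2 f)))"

end

theory Submission
  imports Defs "HOL-Computational_Algebra.Polynomial"
begin

text \<open>Let q = |F| and call x a null point of a plane P if for every a the total weight in A_P
  of the functions f with f(x) = a vanishes. At a null point of a plane with A_P[f1] \<noteq> 0 some
  other member of the support agrees with f1, and two distinct functions of degree at most d agree
  in at most d (q + 1) points of a plane; so a nonzero plane has fewer than q^2 null points, and
  some point x0 of it is not null. The weak constraints transfer these weights between planes
  sharing a line, hence every plane through x0 is nonzero and has few null points. Finally double
  count the triples (P, Q, y, y') with A_P = 0, x0 \<in> Q and y \<noteq> y' in P \<inter> Q: every pair of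
  points of P spans a plane together with x0, whereas y is a null point of Q, because along the
  line through y and y' the weights of Q agree with the vanishing ones of P.\<close>

section \<open>Affine lines and planes\<close>

definition line_of :: "('n \<Rightarrow> 'a::field) \<Rightarrow> ('n \<Rightarrow> 'a) \<Rightarrow> ('n \<Rightarrow> 'a) set" where
  "line_of \<beta> w = {(\<lambda>i. \<beta> i + s * w i) | s. True}"

lemma plane_ofI: "(\<lambda>i. \<alpha> i + a * x i + b * y i) \<in> plane_of \<alpha> x y"
  unfolding plane_of_def by blast

lemma plane_ofE:
  assumes "p \<in> plane_of \<alpha> x y"
  obtains a b where "p = (\<lambda>i. \<alpha> i + a * x i + b * y i)"
  using assms unfolding plane_of_def by blast

lemma line_ofI: "(\<lambda>i. \<beta> i + s * w i) \<in> line_of \<beta> w"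
  unfolding line_of_def by blast

lemma line_ofE:
  assumes "p \<in> line_of \<beta> w"
  obtains s where "p = (\<lambda>i. \<beta> i + s * w i)"
  using assms unfolding line_of_def by blast

lemma base_in_line_of: "\<beta> \<in> line_of \<beta> w"
  using line_ofI[of \<beta> 0 w] by simp

lemma line_of_is_affine_line: "w \<noteq> (\<lambda>_. 0) \<Longrightarrow> is_affine_line (line_of \<beta> w)"
  unfolding is_affine_line_def line_of_def by metis

lemma line_of_subset_plane_of_left: "line_of \<alpha> x \<subseteq> plane_of \<alpha> x y"
  by (auto elim!: line_ofE intro: plane_ofI[of \<alpha> _ x 0 y, simplified])

lemma line_of_subset_plane_of_right: "line_of \<alpha> y \<subseteq> plane_of \<alpha> x y"
  by (auto elim!: line_ofE intro: plane_ofI[of \<alpha> 0 x _ y, simplified])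

lemma affine_planesI: "indep2 x y \<Longrightarrow> plane_of \<alpha> x y \<in> affine_planes"
  unfolding affine_planes_def by blast

lemma affine_planesE:
  assumes "P \<in> affine_planes"
  obtains \<alpha> x y where "indep2 x y" "P = plane_of \<alpha> x y"
  using assms unfolding affine_planes_def by blast

lemma fun_diff_eq_zero_iff: "(\<lambda>i. y i - x i) = (\<lambda>_. 0) \<longleftrightarrow> y = (x :: 'n \<Rightarrow> 'a::ab_group_add)"
  by (simp add: fun_eq_iff)

lemma indep2D: "indep2 x y \<Longrightarrow> (\<And>i. a * x i + b * y i = 0) \<Longrightarrow> a = 0 \<and> b = 0"
  unfolding indep2_def by blast

lemma indep2_nonzero_left: "indep2 x y \<Longrightarrow> x \<noteq> (\<lambda>_. 0)"
  using indep2D[of x y 1 0] by force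

lemma indep2_nonzero_right: "indep2 x y \<Longrightarrow> y \<noteq> (\<lambda>_. 0)"
  using indep2D[of x y 0 1] by force

lemma plane_of_coords_inj:
  assumes "indep2 x y" "(\<lambda>i. \<alpha> i + a * x i + b * y i) = (\<lambda>i. \<alpha> i + a' * x i + b' * y i)"
  shows "a = a' \<and> b = b'"
proof -
  have "(a - a') * x i + (b - b') * y i = 0" for i
    using fun_cong[OF assms(2), of i] by (simp add: algebra_simps)
  then show ?thesis using indep2D[OF assms(1), of "a - a'" "b - b'"] by simp
qed

lemma plane_of_eq_image: "plane_of \<alpha> x y = (\<lambda>(a, b). (\<lambda>i. \<alpha> i + a * x i + b * y i)) ` UNIV"
  unfolding plane_of_def by auto

lemma card_plane_of:
  fixes x y :: "'n \<Rightarrow> 'a::{finite,field}"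
  assumes "indep2 x y"
  shows "card (plane_of \<alpha> x y) = card (UNIV :: 'a set)^2"
proof -
  have "inj (\<lambda>(a, b). (\<lambda>i. \<alpha> i + a * x i + b * y i))"
    using plane_of_coords_inj[OF assms] by (auto simp: inj_on_def)
  then have "card (plane_of \<alpha> x y) = card (UNIV :: ('a \<times> 'a) set)"
    by (simp add: plane_of_eq_image card_image)
  then show ?thesis
    by (simp add: power2_eq_square flip: UNIV_Times_UNIV)
qed

lemma card_affine_plane:
  "P \<in> (affine_planes :: ('n \<Rightarrow> 'a::{finite,field}) set set) \<Longrightarrow> card P = card (UNIV :: 'a set)^2"
  by (erule affine_planesE) (simp add: card_plane_of)

lemma plane_of_rebase:
  assumes "z \<in> plane_of \<alpha> x y"
  shows "plane_of z x y = plane_of \<alpha> x y"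
proof -
  obtain a0 b0 where z: "z = (\<lambda>i. \<alpha> i + a0 * x i + b0 * y i)"
    using assms by (rule plane_ofE)
  show ?thesis
  proof (intro equalityI subsetI)
    fix p assume "p \<in> plane_of z x y"
    then obtain a b where "p = (\<lambda>i. z i + a * x i + b * y i)" by (rule plane_ofE)
    then have "p = (\<lambda>i. \<alpha> i + (a0 + a) * x i + (b0 + b) * y i)"
      unfolding z by (simp add: algebra_simps)
    then show "p \<in> plane_of \<alpha> x y" by (simp only: plane_ofI)
  next
    fix p assume "p \<in> plane_of \<alpha> x y"
    then obtain a b where "p = (\<lambda>i. \<alpha> i + a * x i + b * y i)" by (rule plane_ofE)
    then have "p = (\<lambda>i. z i + (a - a0) * x i + (b - b0) * y i)"
      unfolding z by (simp add: algebra_simps)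
    then show "p \<in> plane_of z x y" by (simp only: plane_ofI)
  qed
qed

lemma affine_plane_rebase:
  assumes "P \<in> affine_planes" "z \<in> P"
  obtains x y where "indep2 x y" "P = plane_of z x y"
  using assms plane_of_rebase by (metis affine_planesE)

lemma affine_plane_affine_comb:
  assumes "P \<in> affine_planes" "p1 \<in> P" "p2 \<in> P" "p3 \<in> P"
  shows "(\<lambda>i. p1 i + s * (p2 i - p1 i) + r * (p3 i - p1 i)) \<in> P"
proof -
  obtain x y where P: "P = plane_of p1 x y" using assms(1,2) by (rule affine_plane_rebase)
  obtain a2 b2 where p2: "p2 = (\<lambda>i. p1 i + a2 * x i + b2 * y i)"
    using assms(3) unfolding P by (rule plane_ofE)
  obtain a3 b3 where p3: "p3 = (\<lambda>i. p1 i + a3 * x i + b3 * y i)"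
    using assms(4) unfolding P by (rule plane_ofE)
  have "(\<lambda>i. p1 i + s * (p2 i - p1 i) + r * (p3 i - p1 i))
      = (\<lambda>i. p1 i + (s * a2 + r * a3) * x i + (s * b2 + r * b3) * y i)"
    unfolding p2 p3 by (simp add: algebra_simps)
  then show ?thesis unfolding P by (simp only: plane_ofI)
qed

lemma line_of_subset_affine_plane:
  assumes "P \<in> affine_planes" "p1 \<in> P" "p2 \<in> P"
  shows "line_of p1 (\<lambda>i. p2 i - p1 i) \<subseteq> P"
  using affine_plane_affine_comb[OF assms assms(3), where r = 0] by (auto elim!: line_ofE)

lemma indep2_off_line:
  fixes w :: "'n \<Rightarrow> 'a::field"
  assumes "w \<noteq> (\<lambda>_. 0)" "z \<notin> line_of \<beta> w"
  shows "indep2 w (\<lambda>i. z i - \<beta> i)"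
  unfolding indep2_def
proof (intro allI impI)
  fix a b :: 'a
  assume ab: "\<forall>i. a * w i + b * (z i - \<beta> i) = 0"
  have "b = 0"
  proof (rule ccontr)
    assume "b \<noteq> 0"
    then have "z = (\<lambda>i. \<beta> i + (- a / b) * w i)"
      using ab by (auto simp: fun_eq_iff field_simps add_eq_0_iff)
    then show False using assms(2) line_ofI by metis
  qed
  with ab assms(1) show "a = 0 \<and> b = 0" by (auto simp: fun_eq_iff)
qed

lemma card_line_of:
  fixes w :: "'n \<Rightarrow> 'a::{finite,field}"
  assumes "w \<noteq> (\<lambda>_. 0)"
  shows "card (line_of \<beta> w) = card (UNIV :: 'a set)"
proof -
  have "line_of \<beta> w = (\<lambda>s. (\<lambda>i. \<beta> i + s * w i)) ` UNIV"
    unfolding line_of_def by auto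
  moreover obtain k where "w k \<noteq> 0" using assms by (auto simp: fun_eq_iff)
  then have "inj (\<lambda>s. (\<lambda>i. \<beta> i + s * w i))"
    by (auto intro!: injI dest!: fun_cong[where x = k])
  ultimately show ?thesis by (simp add: card_image)
qed

text \<open>The plane spanned by the line and a common point off it would lie in both planes, and by
  counting points coincide with both.\<close>

lemma affine_planes_Int_eq_line:
  fixes P P' :: "('n::finite \<Rightarrow> 'a::{finite,field}) set"
  assumes "P \<in> affine_planes" "P' \<in> affine_planes" "P \<noteq> P'" "w \<noteq> (\<lambda>_. 0)"
    and "line_of \<beta> w \<subseteq> P" "line_of \<beta> w \<subseteq> P'"
  shows "P \<inter> P' = line_of \<beta> w"
proof (rule ccontr)
  assume "P \<inter> P' \<noteq> line_of \<beta> w"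
  then obtain z where z: "z \<in> P" "z \<in> P'" "z \<notin> line_of \<beta> w" using assms(5,6) by blast
  let ?S = "plane_of \<beta> w (\<lambda>i. z i - \<beta> i)"
  have ind: "indep2 w (\<lambda>i. z i - \<beta> i)" using assms(4) z(3) by (rule indep2_off_line)
  have "?S = Q" if "Q \<in> affine_planes" "line_of \<beta> w \<subseteq> Q" "z \<in> Q" for Q
  proof (rule card_subset_eq)
    have \<beta>: "\<beta> \<in> Q" and \<beta>w: "(\<lambda>i. \<beta> i + w i) \<in> Q"
      using that(2) base_in_line_of line_ofI[of \<beta> 1 w] by auto
    show "?S \<subseteq> Q"
    proof
      fix p assume "p \<in> ?S"
      then obtain a b where "p = (\<lambda>i. \<beta> i + a * w i + b * (z i - \<beta> i))" by (rule plane_ofE)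
      then have "p = (\<lambda>i. \<beta> i + a * ((\<beta> i + w i) - \<beta> i) + b * (z i - \<beta> i))" by simp
      then show "p \<in> Q" using affine_plane_affine_comb[OF that(1) \<beta> \<beta>w that(3)] by simp
    qed
    show "card ?S = card Q" using card_plane_of[OF ind] card_affine_plane[OF that(1)] by simp
  qed simp
  from this[OF assms(1,5) z(1)] this[OF assms(2,6) z(2)] have "P = P'" by simp
  with assms(3) show False by contradiction
qed

lemma not_indep2_multiple:
  assumes "u \<noteq> (\<lambda>_. 0)" "\<not> indep2 u v"
  obtains c where "v = (\<lambda>i. c * u i)"
proof -
  obtain a b where ab: "\<forall>i. a * u i + b * v i = 0" "\<not> (a = 0 \<and> b = 0)"
    using assms(2) unfolding indep2_def by blast
  have "b \<noteq> 0" using ab assms(1) by (force simp: fun_eq_iff)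
  then have "v = (\<lambda>i. (- a / b) * u i)"
    using ab(1) by (auto simp: fun_eq_iff field_simps add_eq_0_iff)
  then show ?thesis by (rule that)
qed

lemma indep2_exchange:
  assumes "indep2 v1 v2" "u \<noteq> (\<lambda>_. 0)"
  shows "indep2 u v1 \<or> indep2 u v2"
proof (rule ccontr)
  assume "\<not> ?thesis"
  then obtain c1 c2 where "v1 = (\<lambda>i. c1 * u i)" "v2 = (\<lambda>i. c2 * u i)"
    using not_indep2_multiple[OF assms(2)] by metis
  then have "c2 = 0 \<and> - c1 = 0"
    using indep2D[OF assms(1), of c2 "- c1"] by (simp add: algebra_simps)
  then have "v1 = (\<lambda>_. 0)" using \<open>v1 = _\<close> by simp
  then show False using indep2_nonzero_left[OF assms(1)] by blast
qed

lemma indep2_off_plane: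
  assumes "P \<in> affine_planes" "x0 \<notin> P" "y \<in> P" "y' \<in> P" "y \<noteq> y'"
  shows "indep2 (\<lambda>i. y i - x0 i) (\<lambda>i. y' i - x0 i)"
proof (rule ccontr)
  assume dep: "\<not> ?thesis"
  have "y \<noteq> x0" using assms(2,3) by blast
  then have "(\<lambda>i. y i - x0 i) \<noteq> (\<lambda>_. 0)" by (simp add: fun_diff_eq_zero_iff)
  then obtain c where c: "(\<lambda>i. y' i - x0 i) = (\<lambda>i. c * (y i - x0 i))"
    using dep by (rule not_indep2_multiple)
  have "c \<noteq> 1" using c assms(5) by (auto simp: fun_eq_iff)
  then have "x0 = (\<lambda>i. y i + (1 / (1 - c)) * (y' i - y i))"
    using c by (auto simp: fun_eq_iff field_simps dest!: fun_cong)
  then have "x0 \<in> line_of y (\<lambda>i. y' i - y i)" by (simp only: line_ofI)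
  then show False using line_of_subset_affine_plane[OF assms(1,3,4)] assms(2) by blast
qed

lemma affine_plane_through_off_point:
  assumes "P \<in> affine_planes" "x0 \<notin> P" "y \<in> P" "y' \<in> P" "y \<noteq> y'"
  obtains Q where "Q \<in> affine_planes" "x0 \<in> Q" "y \<in> Q" "y' \<in> Q"
proof
  define Q where "Q = plane_of x0 (\<lambda>i. y i - x0 i) (\<lambda>i. y' i - x0 i)"
  show "Q \<in> affine_planes" unfolding Q_def using indep2_off_plane[OF assms] by (rule affine_planesI)
  show "x0 \<in> Q" "y \<in> Q" "y' \<in> Q"
    using plane_ofI[of x0 0 "\<lambda>i. y i - x0 i" 0 "\<lambda>i. y' i - x0 i"]
      plane_ofI[of x0 1 "\<lambda>i. y i - x0 i" 0 "\<lambda>i. y' i - x0 i"]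
      plane_ofI[of x0 0 "\<lambda>i. y i - x0 i" 1 "\<lambda>i. y' i - x0 i"]
    unfolding Q_def by simp_all
qed

definition translate :: "('n \<Rightarrow> 'a::field) \<Rightarrow> ('n \<Rightarrow> 'a) set \<Rightarrow> ('n \<Rightarrow> 'a) set" where
  "translate v P = (\<lambda>p. (\<lambda>i. p i + v i)) ` P"

lemma translate_affine_plane:
  assumes "P \<in> affine_planes"
  shows "translate v P \<in> affine_planes"
proof -
  obtain \<alpha> x y where P: "indep2 x y" "P = plane_of \<alpha> x y" using assms by (rule affine_planesE)
  have "translate v P = plane_of (\<lambda>i. \<alpha> i + v i) x y"
    unfolding P translate_def plane_of_eq_image image_comp
    by (intro image_cong) (auto simp: fun_eq_iff algebra_simps)
  then show ?thesis using affine_planesI[OF P(1)] by simp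
qed

lemma translate_inverse: "translate (\<lambda>i. - v i) (translate v P) = P"
  unfolding translate_def image_comp by simp

lemma card_planes_through_point_le:
  fixes x x' :: "'n::finite \<Rightarrow> 'a::{finite,field}"
  shows "card {P \<in> affine_planes. x \<in> P} \<le> card {P \<in> affine_planes. x' \<in> P}"
proof (rule card_inj_on_le)
  let ?v = "\<lambda>i. x' i - x i"
  show "inj_on (translate ?v) {P \<in> affine_planes. x \<in> P}"
    by (metis (no_types, lifting) inj_onI translate_inverse)
  show "translate ?v ` {P \<in> affine_planes. x \<in> P} \<subseteq> {P \<in> affine_planes. x' \<in> P}"
  proof (rule image_subsetI)
    fix P assume "P \<in> {P \<in> affine_planes. x \<in> P}"
    then have P: "P \<in> affine_planes" "x \<in> P" by simp_all
    have "x' \<in> translate ?v P" unfolding translate_def using P(2) by (rule image_eqI[rotated]) simp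
    then show "translate ?v P \<in> {P \<in> affine_planes. x' \<in> P}"
      using translate_affine_plane[OF P(1)] by simp
  qed
qed simp

text \<open>Translations permute the planes, so every point lies on the same number of planes.\<close>

lemma card_planes_through_point:
  fixes x :: "'n::finite \<Rightarrow> 'a::{finite,field}"
  shows "card {P \<in> affine_planes. x \<in> P} * card (UNIV :: ('n \<Rightarrow> 'a) set)
     = card (affine_planes :: ('n \<Rightarrow> 'a) set set) * card (UNIV :: 'a set)^2"
proof -
  have "card {P \<in> affine_planes. x \<in> P} * card (UNIV :: ('n \<Rightarrow> 'a) set)
      = (\<Sum>x' \<in> (UNIV :: ('n \<Rightarrow> 'a) set). card {P \<in> affine_planes. x \<in> P})"
    by simp
  also have "\<dots> = (\<Sum>x' \<in> UNIV. card {P \<in> (affine_planes :: ('n \<Rightarrow> 'a) set set). x' \<in> P})"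
    by (rule sum.cong[OF refl], intro antisym card_planes_through_point_le)
  also have "\<dots> = (\<Sum>P \<in> (affine_planes :: ('n \<Rightarrow> 'a) set set). card (UNIV :: 'a set)^2)"
    by (rule sum_multicount_gen) (simp_all add: card_affine_plane)
  finally show ?thesis by simp
qed

text \<open>Distinct planes through y and y' meet exactly in the line through y and y', so outside
  that line they are disjoint.\<close>

lemma card_planes_through_two_points:
  fixes y y' :: "'n::finite \<Rightarrow> 'a::{finite,field}"
  assumes "y \<noteq> y'"
  shows "card {P \<in> affine_planes. y \<in> P \<and> y' \<in> P} * (card (UNIV :: 'a set)^2 - card (UNIV :: 'a set))
     \<le> card (UNIV :: ('n \<Rightarrow> 'a) set) - card (UNIV :: 'a set)"
proof -
  define w where "w = (\<lambda>i. y' i - y i)"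
  define L where "L = line_of y w"
  define S where "S = {P \<in> affine_planes. y \<in> P \<and> y' \<in> P}"
  have w: "w \<noteq> (\<lambda>_. 0)" using not_sym[OF assms] unfolding w_def by (simp add: fun_diff_eq_zero_iff)
  have L: "L \<subseteq> P" if "P \<in> S" for P
    using line_of_subset_affine_plane[of P y y'] that unfolding S_def L_def w_def by auto
  have card_L: "card L = card (UNIV :: 'a set)" unfolding L_def using w by (rule card_line_of)
  have "card (P - L) = card (UNIV :: 'a set)^2 - card (UNIV :: 'a set)" if "P \<in> S" for P
  proof -
    have "P \<in> affine_planes" using that by (simp add: S_def)
    with card_Diff_subset[OF _ L[OF that]] card_L show ?thesis by (simp add: card_affine_plane)
  qed
  then have "card S * (card (UNIV :: 'a set)^2 - card (UNIV :: 'a set)) = (\<Sum>P \<in> S. card (P - L))"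
    by simp
  also have "\<dots> = card (\<Union>P \<in> S. P - L)"
  proof -
    have "P \<inter> P' = L" if "P \<in> S" "P' \<in> S" "P \<noteq> P'" for P P'
      using affine_planes_Int_eq_line[of P P' w y] that w L unfolding S_def L_def by auto
    then show ?thesis by (intro card_UN_disjoint[symmetric]) auto
  qed
  also have "\<dots> \<le> card (UNIV - L)" by (rule card_mono) auto
  also have "\<dots> = card (UNIV :: ('n \<Rightarrow> 'a) set) - card (UNIV :: 'a set)"
    using card_L by (simp add: card_Diff_subset)
  finally show ?thesis unfolding S_def .
qed

section \<open>Low-degree functions on lines and planes\<close>

lemma low_deg_outside: "f \<in> low_deg d Q \<Longrightarrow> v \<notin> Q \<Longrightarrow> f v = 0"
  unfolding low_deg_def by blast

lemma low_deg_on_line: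
  fixes f :: "('n \<Rightarrow> 'a::field) \<Rightarrow> 'a"
  assumes "f \<in> low_deg d Q" "\<beta> \<in> Q" "(\<lambda>i. \<beta> i + w i) \<in> Q"
  obtains p where "degree p \<le> d" "\<And>s. f (\<lambda>i. \<beta> i + s * w i) = poly p s"
proof -
  obtain \<alpha> x y c where Q: "Q = plane_of \<alpha> x y" and c: "\<forall>i j. d < i + j \<longrightarrow> c i j = 0"
    and f: "\<forall>a b. f (\<lambda>i. \<alpha> i + a * x i + b * y i) = (\<Sum>i\<le>d. \<Sum>j\<le>d. c i j * a ^ i * b ^ j)"
    using assms(1) unfolding low_deg_def by blast
  obtain a0 b0 where \<beta>: "\<beta> = (\<lambda>i. \<alpha> i + a0 * x i + b0 * y i)"
    using assms(2) unfolding Q by (rule plane_ofE)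
  obtain a1 b1 where \<beta>w: "(\<lambda>i. \<beta> i + w i) = (\<lambda>i. \<alpha> i + a1 * x i + b1 * y i)"
    using assms(3) unfolding Q by (rule plane_ofE)
  define u where "u = a1 - a0"
  define v where "v = b1 - b0"
  define p where "p = (\<Sum>i\<le>d. \<Sum>j\<le>d. smult (c i j) ([:a0, u:] ^ i * [:b0, v:] ^ j))"
  have "w = (\<lambda>i. u * x i + v * y i)"
    using \<beta>w unfolding \<beta> u_def v_def by (auto simp: fun_eq_iff algebra_simps dest!: fun_cong)
  then have "(\<lambda>i. \<beta> i + s * w i) = (\<lambda>i. \<alpha> i + (a0 + s * u) * x i + (b0 + s * v) * y i)" for s
    unfolding \<beta> by (simp add: fun_eq_iff algebra_simps)
  then have eval: "f (\<lambda>i. \<beta> i + s * w i) = poly p s" for s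
    unfolding p_def by (simp add: f poly_sum mult.assoc)
  have "degree p \<le> d"
    unfolding p_def
  proof (intro degree_sum_le)
    fix i j assume "i \<in> {..d}" "j \<in> {..d}"
    show "degree (smult (c i j) ([:a0, u:] ^ i * [:b0, v:] ^ j)) \<le> d"
    proof (cases "i + j \<le> d")
      case True
      have "degree ([:a0, u:] ^ i * [:b0, v:] ^ j) \<le> degree [:a0, u:] * i + degree [:b0, v:] * j"
        by (intro order.trans[OF degree_mult_le] add_mono degree_power_le)
      also have "\<dots> \<le> i + j" by (intro add_mono) (auto simp: degree_pCons_eq_if)
      finally show ?thesis using True by (meson degree_smult_le order.trans)
    next
      case False
      then show ?thesis using c by simp
    qed
  qed auto
  then show ?thesis using eval by (rule that)
qed

lemma card_agree_on_line_le:
  fixes f g :: "('n \<Rightarrow> 'a::field) \<Rightarrow> 'a"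
  assumes "f \<in> low_deg d Q" "g \<in> low_deg d Q" "\<beta> \<in> Q" "(\<lambda>i. \<beta> i + w i) \<in> Q" "f \<beta> \<noteq> g \<beta>"
  shows "card {p \<in> line_of \<beta> w. g p = f p} \<le> d"
proof -
  obtain pf where pf: "degree pf \<le> d" "\<And>s. f (\<lambda>i. \<beta> i + s * w i) = poly pf s"
    using low_deg_on_line[OF assms(1,3,4)] by blast
  obtain pg where pg: "degree pg \<le> d" "\<And>s. g (\<lambda>i. \<beta> i + s * w i) = poly pg s"
    using low_deg_on_line[OF assms(2,3,4)] by blast
  have "poly (pf - pg) 0 \<noteq> 0" using pf(2)[of 0] pg(2)[of 0] assms(5) by simp
  then have "pf - pg \<noteq> 0" by auto
  have "{p \<in> line_of \<beta> w. g p = f p} = (\<lambda>s. (\<lambda>i. \<beta> i + s * w i)) ` {s. poly (pf - pg) s = 0}"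
    using pf(2) pg(2) unfolding line_of_def by auto
  also have "card \<dots> \<le> card {s. poly (pf - pg) s = 0}"
    using \<open>pf - pg \<noteq> 0\<close> by (intro card_image_le poly_roots_finite)
  also have "\<dots> \<le> degree (pf - pg)" using \<open>pf - pg \<noteq> 0\<close> by (rule card_poly_roots_bound)
  also have "\<dots> \<le> d" using degree_diff_le_max[of pf pg] pf(1) pg(1) by simp
  finally show ?thesis .
qed

lemma plane_of_subset_Union_lines:
  "plane_of z x y \<subseteq> (\<Union>w \<in> insert y (range (\<lambda>r i. x i + r * y i)). line_of z w)"
proof
  fix p assume "p \<in> plane_of z x y"
  then obtain a b where p: "p = (\<lambda>i. z i + a * x i + b * y i)" by (rule plane_ofE)
  show "p \<in> (\<Union>w \<in> insert y (range (\<lambda>r i. x i + r * y i)). line_of z w)"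
  proof (cases "a = 0")
    case True
    then have "p \<in> line_of z y" using p line_ofI[of z b y] by simp
    then show ?thesis by blast
  next
    case False
    then have "p = (\<lambda>i. z i + a * (x i + (b / a) * y i))" using p by (simp add: distrib_left add.assoc)
    then have "p \<in> line_of z (\<lambda>i. x i + (b / a) * y i)" by (simp only: line_ofI)
    then show ?thesis by blast
  qed
qed

lemma base_plus_direction_in_plane_of:
  assumes "w \<in> insert y (range (\<lambda>r i. x i + r * y i))"
  shows "(\<lambda>i. z i + w i) \<in> plane_of z x y"
proof -
  from assms consider "w = y" | r where "w = (\<lambda>i. x i + r * y i)" by blast
  then show ?thesis
  proof cases
    case 1
    then show ?thesis using plane_ofI[of z 0 x 1 y] by simp
  next
    case (2 r)
    then show ?thesis using plane_ofI[of z 1 x r y] by (simp add: add.assoc)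
  qed
qed

text \<open>Two distinct low-degree functions differ at some point z of the plane, hence they agree
  in at most d points on each of the q + 1 lines through z.\<close>

lemma card_agree_on_plane_le:
  fixes f g :: "('n::finite \<Rightarrow> 'a::{finite,field}) \<Rightarrow> 'a"
  assumes "Q \<in> affine_planes" "f \<in> low_deg d Q" "g \<in> low_deg d Q" "f \<noteq> g"
  shows "card {y \<in> Q. g y = f y} \<le> d * (card (UNIV :: 'a set) + 1)"
proof -
  obtain z where z: "f z \<noteq> g z" using assms(4) by (auto simp: fun_eq_iff)
  then have "z \<in> Q" using low_deg_outside[OF assms(2)] low_deg_outside[OF assms(3)] by fastforce
  then obtain x y where Q: "Q = plane_of z x y" using assms(1) affine_plane_rebase by blast
  define D where "D = insert y (range (\<lambda>r i. x i + r * y i))"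
  have "{p \<in> Q. g p = f p} \<subseteq> (\<Union>w \<in> D. {p \<in> line_of z w. g p = f p})"
    using plane_of_subset_Union_lines[of z x y] unfolding Q D_def by blast
  then have "card {p \<in> Q. g p = f p} \<le> card (\<Union>w \<in> D. {p \<in> line_of z w. g p = f p})"
    by (intro card_mono) simp_all
  also have "\<dots> \<le> (\<Sum>w \<in> D. card {p \<in> line_of z w. g p = f p})"
    by (rule card_UN_le) simp
  also have "\<dots> \<le> (\<Sum>w \<in> D. d)"
  proof (rule sum_mono)
    fix w assume "w \<in> D"
    then have "(\<lambda>i. z i + w i) \<in> Q" unfolding Q D_def by (rule base_plus_direction_in_plane_of)
    then show "card {p \<in> line_of z w. g p = f p} \<le> d"
      by (rule card_agree_on_line_le[where \<beta> = z, OF assms(2,3) \<open>z \<in> Q\<close> _ z])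
  qed
  also have "\<dots> = card D * d" by simp
  also have "\<dots> \<le> (card (UNIV :: 'a set) + 1) * d"
  proof (rule mult_right_mono)
    have "card D \<le> Suc (card (range (\<lambda>r i. x i + r * y i) :: ('n \<Rightarrow> 'a) set))"
      unfolding D_def by (simp add: card_insert_if)
    also have "\<dots> \<le> card (UNIV :: 'a set) + 1" using card_image_le[of "UNIV :: 'a set"] by simp
    finally show "card D \<le> card (UNIV :: 'a set) + 1" .
  qed simp
  finally show ?thesis by (simp add: mult.commute)
qed

section \<open>Marginals and null points\<close>

definition marginal ::
  "nat \<Rightarrow> (('n \<Rightarrow> 'a::field) set \<Rightarrow> (('n \<Rightarrow> 'a) \<Rightarrow> 'a) \<Rightarrow> int) \<Rightarrow> ('n \<Rightarrow> 'a) set \<Rightarrow> ('n \<Rightarrow> 'a) \<Rightarrow> 'a \<Rightarrow> int"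
  where "marginal d A P x a = (\<Sum>f \<in> {f \<in> low_deg d P. f x = a}. A P f)"

lemma marginal_eq_on_common_line:
  fixes P P' :: "('n::finite \<Rightarrow> 'a::{finite,field}) set"
  assumes "weak_PvP d A" "P \<in> affine_planes" "P' \<in> affine_planes" "w \<noteq> (\<lambda>_. 0)"
    and "line_of \<beta> w \<subseteq> P" "line_of \<beta> w \<subseteq> P'" "x \<in> line_of \<beta> w"
  shows "marginal d A P x = marginal d A P' x"
proof (cases "P = P'")
  case False
  have "P \<inter> P' = line_of \<beta> w" using assms(2,3) False assms(4-6) by (rule affine_planes_Int_eq_line)
  then have "is_affine_line (P \<inter> P')" "x \<in> P \<inter> P'"
    using line_of_is_affine_line[OF assms(4)] assms(7) by simp_all
  note weak = assms(1)[unfolded weak_PvP_def, rule_format, OF assms(2,3) this]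
  show ?thesis
    by (rule ext) (unfold marginal_def, rule weak)
qed simp

text \<open>P and Q are connected through a plane that shares a line through x with each of them.\<close>

lemma marginal_eq_through_point:
  fixes P Q :: "('n::finite \<Rightarrow> 'a::{finite,field}) set"
  assumes "weak_PvP d A" "P \<in> affine_planes" "Q \<in> affine_planes" "x \<in> P" "x \<in> Q"
  shows "marginal d A Q x = marginal d A P x"
proof -
  obtain u1 u2 where u: "indep2 u1 u2" "P = plane_of x u1 u2"
    using assms(2,4) by (rule affine_plane_rebase)
  obtain v1 v2 where v: "indep2 v1 v2" "Q = plane_of x v1 v2"
    using assms(3,5) by (rule affine_plane_rebase)
  have u1: "u1 \<noteq> (\<lambda>_. 0)" using u(1) by (rule indep2_nonzero_left)
  obtain v where "indep2 u1 v" and v_Q: "line_of x v \<subseteq> Q"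
    using indep2_exchange[OF v(1) u1] line_of_subset_plane_of_left line_of_subset_plane_of_right
    unfolding v(2) by blast
  have v: "v \<noteq> (\<lambda>_. 0)" using \<open>indep2 u1 v\<close> by (rule indep2_nonzero_right)
  let ?R = "plane_of x u1 v"
  have R: "?R \<in> affine_planes" using \<open>indep2 u1 v\<close> by (rule affine_planesI)
  have "marginal d A P x = marginal d A ?R x"
    using assms(1,2) R u1 line_of_subset_plane_of_left line_of_subset_plane_of_left base_in_line_of
    unfolding u(2) by (rule marginal_eq_on_common_line)
  also have "\<dots> = marginal d A Q x"
    using assms(1) R assms(3) v line_of_subset_plane_of_right v_Q base_in_line_of
    by (rule marginal_eq_on_common_line)
  finally show ?thesis by simp
qed

lemma marginal_zero: "\<forall>f \<in> low_deg d P. A P f = 0 \<Longrightarrow> marginal d A P x a = 0"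
  unfolding marginal_def by simp

definition null_points ::
  "nat \<Rightarrow> (('n \<Rightarrow> 'a::field) set \<Rightarrow> (('n \<Rightarrow> 'a) \<Rightarrow> 'a) \<Rightarrow> int) \<Rightarrow> ('n \<Rightarrow> 'a) set \<Rightarrow> ('n \<Rightarrow> 'a) set"
  where "null_points d A Q = {x \<in> Q. \<forall>a. marginal d A Q x a = 0}"

text \<open>At a null point x the weight of f1 in the marginal at f1 x must be cancelled, so some other
  function of the support agrees with f1 at x.\<close>

lemma card_null_points_le:
  fixes Q :: "('n::finite \<Rightarrow> 'a::{finite,field}) set"
  assumes "Q \<in> affine_planes" "f1 \<in> low_deg d Q" "A Q f1 \<noteq> 0"
  shows "card (null_points d A Q) \<le> (card (supp d A Q) - 1) * (d * (card (UNIV :: 'a set) + 1))"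
proof -
  have f1: "f1 \<in> supp d A Q" using assms(2,3) unfolding supp_def by simp
  have "null_points d A Q \<subseteq> (\<Union>g \<in> supp d A Q - {f1}. {x \<in> Q. g x = f1 x})"
  proof
    fix x assume x: "x \<in> null_points d A Q"
    let ?others = "{f \<in> low_deg d Q. f x = f1 x} - {f1}"
    have "A Q f1 + (\<Sum>f \<in> ?others. A Q f) = marginal d A Q x (f1 x)"
      unfolding marginal_def using assms(2) by (simp add: sum.remove)
    also have "\<dots> = 0" using x unfolding null_points_def by simp
    finally have "(\<Sum>f \<in> ?others. A Q f) \<noteq> 0" using assms(3) by linarith
    then obtain g where "g \<in> ?others" "A Q g \<noteq> 0" by (meson sum.neutral)
    then show "x \<in> (\<Union>g \<in> supp d A Q - {f1}. {x \<in> Q. g x = f1 x})"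
      using x unfolding supp_def null_points_def by auto
  qed
  then have "card (null_points d A Q) \<le> card (\<Union>g \<in> supp d A Q - {f1}. {x \<in> Q. g x = f1 x})"
    by (intro card_mono) simp_all
  also have "\<dots> \<le> (\<Sum>g \<in> supp d A Q - {f1}. card {x \<in> Q. g x = f1 x})"
    by (rule card_UN_le) simp
  also have "\<dots> \<le> (\<Sum>g \<in> supp d A Q - {f1}. d * (card (UNIV :: 'a set) + 1))"
    using card_agree_on_plane_le[OF assms(1,2)] by (intro sum_mono) (auto simp: supp_def)
  also have "\<dots> = (card (supp d A Q) - 1) * (d * (card (UNIV :: 'a set) + 1))"
    using f1 by simp
  finally show ?thesis .
qed

lemma null_point_of_zero_plane:
  fixes P Q :: "('n::finite \<Rightarrow> 'a::{finite,field}) set"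
  assumes "weak_PvP d A" "P \<in> affine_planes" "Q \<in> affine_planes" "\<forall>f \<in> low_deg d P. A P f = 0"
    and "y \<in> P \<inter> Q" "y' \<in> P \<inter> Q" "y \<noteq> y'"
  shows "y \<in> null_points d A Q"
proof -
  let ?w = "\<lambda>i. y' i - y i"
  have w: "?w \<noteq> (\<lambda>_. 0)" using not_sym[OF assms(7)] by (simp add: fun_diff_eq_zero_iff)
  have lines: "line_of y ?w \<subseteq> Q" "line_of y ?w \<subseteq> P"
    using assms(2,3,5,6) by (simp_all add: line_of_subset_affine_plane)
  have "marginal d A Q y = marginal d A P y"
    using assms(1,3,2) w lines base_in_line_of by (rule marginal_eq_on_common_line)
  then show ?thesis using assms(5) marginal_zero[of d P A y] assms(4) unfolding null_points_def by simp
qed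

lemma nonzero_plane_through_non_null_point:
  fixes P Q :: "('n::finite \<Rightarrow> 'a::{finite,field}) set"
  assumes "weak_PvP d A" "P \<in> affine_planes" "x \<in> P - null_points d A P"
    and "Q \<in> affine_planes" "x \<in> Q"
  shows "\<exists>f \<in> low_deg d Q. A Q f \<noteq> 0"
proof -
  have "marginal d A Q x = marginal d A P x"
    using assms by (intro marginal_eq_through_point) simp_all
  then show ?thesis using assms(3) marginal_zero[of d Q A x] unfolding null_points_def by auto
qed

section \<open>Double counting\<close>

lemma card_distinct_pairs_fst_in:
  assumes "finite S" "B \<subseteq> S"
  shows "card {p \<in> S \<times> S - Id. fst p \<in> B} = card B * (card S - 1)"
proof -
  have "{p \<in> S \<times> S - Id. fst p \<in> B} = (SIGMA y:B. S - {y})" using assms(2) by auto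
  then have "card {p \<in> S \<times> S - Id. fst p \<in> B} = (\<Sum>y \<in> B. card (S - {y}))"
    using assms by (simp add: card_SigmaI finite_subset)
  also have "\<dots> = (\<Sum>y \<in> B. card S - 1)"
    using assms by (intro sum.cong refl) (auto simp: card_Diff_singleton)
  also have "\<dots> = card B * (card S - 1)" by simp
  finally show ?thesis .
qed

corollary card_distinct_pairs:
  assumes "finite S"
  shows "card (S \<times> S - Id) = card S * (card S - 1)"
proof -
  have "card (S \<times> S - Id) = card {p \<in> S \<times> S - Id. fst p \<in> S}"
    by (rule arg_cong[where f = card]) auto
  also have "\<dots> = card S * (card S - 1)" using assms order_refl by (rule card_distinct_pairs_fst_in)
  finally show ?thesis .
qed

definition zero_planes :: "nat \<Rightarrow> (('n \<Rightarrow> 'a::field) set \<Rightarrow> (('n \<Rightarrow> 'a) \<Rightarrow> 'a) \<Rightarrow> int) \<Rightarrow> ('n \<Rightarrow> 'a) set set"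
  where "zero_planes d A = {P \<in> affine_planes. \<forall>f \<in> low_deg d P. A P f = 0}"

lemma card_pairs_le_sum_planes_through:
  fixes P :: "('n::finite \<Rightarrow> 'a::{finite,field}) set"
  assumes "P \<in> affine_planes" "x0 \<notin> P"
  shows "card (P \<times> P - Id) \<le> (\<Sum>Q \<in> {Q \<in> affine_planes. x0 \<in> Q}. card ((P \<inter> Q) \<times> (P \<inter> Q) - Id))"
proof -
  have "P \<times> P - Id \<subseteq> (\<Union>Q \<in> {Q \<in> affine_planes. x0 \<in> Q}. (P \<inter> Q) \<times> (P \<inter> Q) - Id)"
  proof
    fix p assume "p \<in> P \<times> P - Id"
    then obtain y y' where p: "p = (y, y')" "y \<in> P" "y' \<in> P" "y \<noteq> y'" by auto
    obtain Q where "Q \<in> affine_planes" "x0 \<in> Q" "y \<in> Q" "y' \<in> Q"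
      using assms p(2-4) by (rule affine_plane_through_off_point)
    with p show "p \<in> (\<Union>Q \<in> {Q \<in> affine_planes. x0 \<in> Q}. (P \<inter> Q) \<times> (P \<inter> Q) - Id)" by blast
  qed
  then have "card (P \<times> P - Id) \<le> card (\<Union>Q \<in> {Q \<in> affine_planes. x0 \<in> Q}. (P \<inter> Q) \<times> (P \<inter> Q) - Id)"
    by (intro card_mono) simp_all
  also have "\<dots> \<le> (\<Sum>Q \<in> {Q \<in> affine_planes. x0 \<in> Q}. card ((P \<inter> Q) \<times> (P \<inter> Q) - Id))"
    by (rule card_UN_le) simp
  finally show ?thesis .
qed

lemma card_zero_planes_through_pair_le:
  fixes Q :: "('n::finite \<Rightarrow> 'a::{finite,field}) set"
  assumes "weak_PvP d A" "Q \<in> affine_planes" "y \<in> Q" "y' \<in> Q" "y \<noteq> y'"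
  shows "card {P \<in> zero_planes d A. y \<in> P \<and> y' \<in> P} * (card (UNIV :: 'a set)^2 - card (UNIV :: 'a set))
         \<le> (if y \<in> null_points d A Q then card (UNIV :: ('n \<Rightarrow> 'a) set) else 0)"
proof (cases "{P \<in> zero_planes d A. y \<in> P \<and> y' \<in> P} = {}")
  case False
  then obtain P where P: "P \<in> affine_planes" "\<forall>f \<in> low_deg d P. A P f = 0" "y \<in> P" "y' \<in> P"
    unfolding zero_planes_def by blast
  then have "y \<in> null_points d A Q"
    using assms(3-5) by (intro null_point_of_zero_plane[OF assms(1) P(1) assms(2) P(2)]) auto
  have "{P \<in> zero_planes d A. y \<in> P \<and> y' \<in> P} \<subseteq> {P \<in> affine_planes. y \<in> P \<and> y' \<in> P}"
    unfolding zero_planes_def by blast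
  then have "card {P \<in> zero_planes d A. y \<in> P \<and> y' \<in> P} * (card (UNIV :: 'a set)^2 - card (UNIV :: 'a set))
      \<le> card {P \<in> affine_planes. y \<in> P \<and> y' \<in> P} * (card (UNIV :: 'a set)^2 - card (UNIV :: 'a set))"
    by (intro mult_le_mono1 card_mono) simp_all
  also have "\<dots> \<le> card (UNIV :: ('n \<Rightarrow> 'a) set) - card (UNIV :: 'a set)"
    using assms(5) by (rule card_planes_through_two_points)
  finally show ?thesis using \<open>y \<in> null_points d A Q\<close> by simp
qed (simp only: card.empty mult_0 zero_le)

lemma sum_zero_planes_pairs_le:
  fixes Q :: "('n::finite \<Rightarrow> 'a::{finite,field}) set"
  assumes "weak_PvP d A" "Q \<in> affine_planes"
  shows "(\<Sum>P \<in> zero_planes d A. card ((P \<inter> Q) \<times> (P \<inter> Q) - Id))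
           * (card (UNIV :: 'a set)^2 - card (UNIV :: 'a set))
         \<le> card (null_points d A Q) * (card (UNIV :: 'a set)^2 - 1) * card (UNIV :: ('n \<Rightarrow> 'a) set)"
proof -
  let ?q = "card (UNIV :: 'a set)" and ?N = "card (UNIV :: ('n \<Rightarrow> 'a) set)"
  let ?B = "null_points d A Q"
  define through where "through p = {P \<in> zero_planes d A. fst p \<in> P \<and> snd p \<in> P}" for p
  have "(\<Sum>P \<in> zero_planes d A. card ((P \<inter> Q) \<times> (P \<inter> Q) - Id))
      = (\<Sum>P \<in> zero_planes d A. card {p \<in> Q \<times> Q - Id. fst p \<in> P \<and> snd p \<in> P})"
    by (intro sum.cong refl arg_cong[where f = card]) auto
  also have "\<dots> = (\<Sum>p \<in> Q \<times> Q - Id. card (through p))"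
    by (rule sum_multicount_gen) (auto simp: through_def)
  finally have "(\<Sum>P \<in> zero_planes d A. card ((P \<inter> Q) \<times> (P \<inter> Q) - Id)) * (?q^2 - ?q)
      = (\<Sum>p \<in> Q \<times> Q - Id. card (through p) * (?q^2 - ?q))"
    by (simp add: sum_distrib_right)
  also have "\<dots> \<le> (\<Sum>p \<in> Q \<times> Q - Id. if fst p \<in> ?B then ?N else 0)"
    unfolding through_def
    by (intro sum_mono card_zero_planes_through_pair_le[OF assms]) auto
  also have "\<dots> = card {p \<in> Q \<times> Q - Id. fst p \<in> ?B} * ?N"
    by (simp add: sum.If_cases Int_def)
  also have "\<dots> = card ?B * (?q^2 - 1) * ?N"
    using card_distinct_pairs_fst_in[of Q ?B] card_affine_plane[OF assms(2)]
    by (simp add: null_points_def)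
  finally show ?thesis .
qed

lemma card_zero_planes_mult_le_pairs:
  fixes x0 :: "'n::finite \<Rightarrow> 'a::{finite,field}"
  assumes "\<And>Q. Q \<in> affine_planes \<Longrightarrow> x0 \<in> Q \<Longrightarrow> Q \<notin> zero_planes d A"
  shows "card (zero_planes d A :: ('n \<Rightarrow> 'a) set set)
           * (card (UNIV :: 'a set)^2 * (card (UNIV :: 'a set)^2 - 1))
         \<le> (\<Sum>P \<in> zero_planes d A. \<Sum>Q \<in> {Q \<in> affine_planes. x0 \<in> Q}. card ((P \<inter> Q) \<times> (P \<inter> Q) - Id))"
proof -
  have "card (P \<times> P - Id) = card (UNIV :: 'a set)^2 * (card (UNIV :: 'a set)^2 - 1)"
    if "P \<in> zero_planes d A" for P :: "('n \<Rightarrow> 'a) set"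
  proof -
    have "P \<in> affine_planes" using that by (simp add: zero_planes_def)
    then show ?thesis using card_distinct_pairs[of P] by (simp add: card_affine_plane)
  qed
  then have "card (zero_planes d A :: ('n \<Rightarrow> 'a) set set)
      * (card (UNIV :: 'a set)^2 * (card (UNIV :: 'a set)^2 - 1))
      = (\<Sum>P \<in> zero_planes d A. card (P \<times> P - Id))"
    by simp
  also have "\<dots> \<le> (\<Sum>P \<in> zero_planes d A. \<Sum>Q \<in> {Q \<in> affine_planes. x0 \<in> Q}.
      card ((P \<inter> Q) \<times> (P \<inter> Q) - Id))"
    by (intro sum_mono card_pairs_le_sum_planes_through) (use assms in \<open>auto simp: zero_planes_def\<close>)
  finally show ?thesis .
qed

lemma card_field_ge_2: "2 \<le> card (UNIV :: 'a::{finite,field} set)"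
proof -
  have "card {0 :: 'a, 1} \<le> card (UNIV :: 'a set)" by (rule card_mono) simp_all
  then show ?thesis by simp
qed

lemma card_zero_planes_le:
  fixes x0 :: "'n::finite \<Rightarrow> 'a::{finite,field}" and m :: real
  assumes "weak_PvP d A"
    and nonzero: "\<And>Q. Q \<in> affine_planes \<Longrightarrow> x0 \<in> Q \<Longrightarrow> Q \<notin> zero_planes d A"
    and null: "\<And>Q. Q \<in> affine_planes \<Longrightarrow> x0 \<in> Q \<Longrightarrow> real (card (null_points d A Q)) \<le> m"
  shows "real (card (zero_planes d A :: ('n \<Rightarrow> 'a) set set))
           * (real (card (UNIV :: 'a set))^2 - real (card (UNIV :: 'a set)))
         \<le> real (card (affine_planes :: ('n \<Rightarrow> 'a) set set)) * m"
proof -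
  let ?Z = "zero_planes d A :: ('n \<Rightarrow> 'a) set set" and ?X = "{Q \<in> affine_planes. x0 \<in> Q}"
  let ?q = "card (UNIV :: 'a set)" and ?N = "card (UNIV :: ('n \<Rightarrow> 'a) set)"
  define W where "W = (\<Sum>P \<in> ?Z. \<Sum>Q \<in> ?X. card ((P \<inter> Q) \<times> (P \<inter> Q) - Id))"
  have q: "2 \<le> real ?q" using card_field_ge_2 by simp
  have q_le: "1 \<le> ?q^2" "?q \<le> ?q^2" using card_field_ge_2[where 'a = 'a]
    by (simp_all add: power2_eq_square)
  have "real (card ?Z * (?q^2 * (?q^2 - 1))) \<le> real W"
    unfolding W_def using nonzero by (intro of_nat_mono card_zero_planes_mult_le_pairs)
  then have lower: "real (card ?Z) * (real ?q^2 * (real ?q^2 - 1)) \<le> real W"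
    using q_le by (simp add: of_nat_diff)
  have "W * (?q^2 - ?q) = (\<Sum>Q \<in> ?X. (\<Sum>P \<in> ?Z. card ((P \<inter> Q) \<times> (P \<inter> Q) - Id)) * (?q^2 - ?q))"
    unfolding W_def by (simp add: sum.swap[of _ ?Z] sum_distrib_right)
  also have "\<dots> \<le> (\<Sum>Q \<in> ?X. card (null_points d A Q) * (?q^2 - 1) * ?N)"
    using sum_zero_planes_pairs_le[OF assms(1)] by (intro sum_mono) simp
  finally have "real (W * (?q^2 - ?q)) \<le> real (\<Sum>Q \<in> ?X. card (null_points d A Q) * (?q^2 - 1) * ?N)"
    by (rule of_nat_mono)
  then have "real W * (real ?q^2 - real ?q)
      \<le> (\<Sum>Q \<in> ?X. real (card (null_points d A Q)) * (real ?q^2 - 1) * real ?N)"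
    using q_le by (simp add: of_nat_diff)
  also have "\<dots> \<le> real (card ?X) * (m * (real ?q^2 - 1) * real ?N)"
    using q null by (intro sum_bounded_above mult_right_mono) auto
  also have "\<dots> = (real (card ?X) * real ?N) * m * (real ?q^2 - 1)" by (simp only: mult_ac)
  also have "real (card ?X) * real ?N = real (card (affine_planes :: ('n \<Rightarrow> 'a) set set)) * real ?q^2"
    using arg_cong[OF card_planes_through_point[of x0], of real] by simp
  also have "\<dots> * m * (real ?q^2 - 1)
      = real (card (affine_planes :: ('n \<Rightarrow> 'a) set set)) * m * (real ?q^2 * (real ?q^2 - 1))"
    by (simp only: mult_ac)
  finally have upper: "real W * (real ?q^2 - real ?q)
      \<le> real (card (affine_planes :: ('n \<Rightarrow> 'a) set set)) * m * (real ?q^2 * (real ?q^2 - 1))" .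
  have "4 \<le> real ?q^2" using power_mono[OF q, of 2] by simp
  then have pos: "0 < real ?q^2 * (real ?q^2 - 1)" by (intro mult_pos_pos) simp_all
  have "real ?q \<le> real ?q^2" using q_le(2) by (metis of_nat_le_iff of_nat_power)
  then have "0 \<le> real ?q^2 - real ?q" by simp
  have "real (card ?Z) * (real ?q^2 - real ?q) * (real ?q^2 * (real ?q^2 - 1))
      = real (card ?Z) * (real ?q^2 * (real ?q^2 - 1)) * (real ?q^2 - real ?q)"
    by (simp only: mult_ac)
  also have "\<dots> \<le> real W * (real ?q^2 - real ?q)"
    using lower \<open>0 \<le> real ?q^2 - real ?q\<close> by (rule mult_right_mono)
  also note upper
  finally show ?thesis using pos by (rule mult_right_le_imp_le)
qed

lemma real_card_null_points_le:
  fixes Q :: "('n::finite \<Rightarrow> 'a::{finite,field}) set" and u :: real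
  assumes "Q \<in> affine_planes" "f \<in> low_deg d Q" "A Q f \<noteq> 0" "real (card (supp d A Q)) \<le> u"
  shows "real (card (null_points d A Q)) \<le> (u - 1) * real d * (real (card (UNIV :: 'a set)) + 1)"
proof -
  have "f \<in> supp d A Q" using assms(2,3) by (simp add: supp_def)
  then have "1 \<le> card (supp d A Q)" by (simp add: Suc_le_eq card_gt_0_iff) blast
  have "real (card (null_points d A Q))
      \<le> real ((card (supp d A Q) - 1) * (d * (card (UNIV :: 'a set) + 1)))"
    using card_null_points_le[where A = A, OF assms(1-3)] by (rule of_nat_mono)
  also have "\<dots> = (real (card (supp d A Q)) - 1) * real d * (real (card (UNIV :: 'a set)) + 1)"
    by (simp only: of_nat_mult of_nat_add of_nat_1 of_nat_diff[OF \<open>1 \<le> card (supp d A Q)\<close>]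
        mult.assoc)
  also have "\<dots> \<le> (u - 1) * real d * (real (card (UNIV :: 'a set)) + 1)"
    using assms(4) by (intro mult_right_mono) auto
  finally show ?thesis .
qed

lemma exists_non_null_point:
  fixes P :: "('n::finite \<Rightarrow> 'a::{finite,field}) set" and u :: real
  assumes "P \<in> affine_planes" "f \<in> low_deg d P" "A P f \<noteq> 0" "real (card (supp d A P)) \<le> u"
    and "1 \<le> u" "(real d + 3) * u < real (card (UNIV :: 'a set))"
  obtains x where "x \<in> P - null_points d A P"
proof -
  let ?q = "real (card (UNIV :: 'a set))"
  have "(u - 1) * real d < ?q - 3" using assms(5,6) by (simp add: algebra_simps)
  then have "(u - 1) * real d * (?q + 1) < (?q - 3) * (?q + 1)"
    by (intro mult_strict_right_mono) simp_all
  also have "\<dots> < ?q^2" by (simp add: power2_eq_square algebra_simps)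
  also have "\<dots> = real (card P)" using card_affine_plane[OF assms(1)] by simp
  finally have "real (card (null_points d A P)) < real (card P)"
    using real_card_null_points_le[where A = A, OF assms(1-4)] by linarith
  then have "\<not> P \<subseteq> null_points d A P" by (meson card_mono finite not_le of_nat_le_iff)
  then show ?thesis using that by blast
qed

lemma fraction_le_of_double_count:
  fixes z a q u :: real
  assumes "2 \<le> q" "1 \<le> u" "(real d + 3) * u < q" "0 < a"
    and "z * (q^2 - q) \<le> a * ((u - 1) * real d * (q + 1))"
  shows "z / a \<le> (real d + 3) * (u / q)"
proof -
  have "0 \<le> real d * u" using assms(2) by simp
  moreover have "(real d + 3) * u = real d * u + 3 * u" by (simp add: algebra_simps)
  ultimately have "2 * u \<le> q + 1" using assms(2,3) by linarith
  then have "0 \<le> real d * (q + 1 - 2 * u)" by simp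
  moreover have "0 \<le> 3 * u * (q - 1)" using assms(1,2) by simp
  ultimately have key: "(u - 1) * real d * (q + 1) \<le> (real d + 3) * u * (q - 1)"
    by (simp add: algebra_simps)
  have "(z * q) * (q - 1) = z * (q^2 - q)" by (simp add: power2_eq_square algebra_simps)
  also have "\<dots> \<le> a * ((u - 1) * real d * (q + 1))" by (rule assms(5))
  also have "\<dots> \<le> a * ((real d + 3) * u * (q - 1))" using key assms(4) by simp
  also have "\<dots> = (a * (real d + 3) * u) * (q - 1)" by (simp only: mult_ac)
  finally have "z * q \<le> a * (real d + 3) * u"
    by (rule mult_right_le_imp_le) (use assms(1) in simp)
  moreover have "0 < q" using assms(1) by simp
  ultimately have "z \<le> a * ((real d + 3) * (u / q))" by (simp add: field_simps)
  then show ?thesis using assms(4) by (simp add: divide_le_eq mult.commute)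
qed

lemma zero_planes_fraction_le:
  fixes A :: "('n::finite \<Rightarrow> 'a::{finite,field}) set \<Rightarrow> (('n \<Rightarrow> 'a) \<Rightarrow> 'a) \<Rightarrow> int" and u :: real
  assumes "weak_PvP d A" "P0 \<in> affine_planes" "f0 \<in> low_deg d P0" "A P0 f0 \<noteq> 0"
    and supp: "\<forall>P \<in> affine_planes. real (card (supp d A P)) \<le> u"
    and "1 \<le> u" "(real d + 3) * u < real (card (UNIV :: 'a set))"
  shows "real (card (zero_planes d A)) / real (card (affine_planes :: ('n \<Rightarrow> 'a) set set))
           \<le> (real d + 3) * (u / real (card (UNIV :: 'a set)))"
proof (rule fraction_le_of_double_count)
  obtain x0 where x0: "x0 \<in> P0 - null_points d A P0"
    using exists_non_null_point[where A = A, OF assms(2-4)] supp assms(2,6,7) by blast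
  show "real (card (zero_planes d A)) * (real (card (UNIV :: 'a set))^2 - real (card (UNIV :: 'a set)))
      \<le> real (card (affine_planes :: ('n \<Rightarrow> 'a) set set))
          * ((u - 1) * real d * (real (card (UNIV :: 'a set)) + 1))"
  proof (rule card_zero_planes_le[OF assms(1)])
    fix Q :: "('n \<Rightarrow> 'a) set" assume Q: "Q \<in> affine_planes" "x0 \<in> Q"
    obtain f where "f \<in> low_deg d Q" "A Q f \<noteq> 0"
      using nonzero_plane_through_non_null_point[OF assms(1,2) x0 Q] by blast
    then show "Q \<notin> zero_planes d A"
      and "real (card (null_points d A Q)) \<le> (u - 1) * real d * (real (card (UNIV :: 'a set)) + 1)"
      using real_card_null_points_le[where A = A, OF Q(1)] supp Q(1)
      unfolding zero_planes_def by auto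
  qed
  show "0 < real (card (affine_planes :: ('n \<Rightarrow> 'a) set set))"
    using assms(2) by (auto simp: card_gt_0_iff)
qed (use assms(6,7) card_field_ge_2 in simp_all)

lemma zero_planes_fraction_le_1:
  "real (card (zero_planes d A :: ('n::finite \<Rightarrow> 'a::{finite,field}) set set))
     / real (card (affine_planes :: ('n \<Rightarrow> 'a) set set)) \<le> 1"
proof -
  have "card (zero_planes d A :: ('n \<Rightarrow> 'a) set set) \<le> card (affine_planes :: ('n \<Rightarrow> 'a) set set)"
    unfolding zero_planes_def by (intro card_mono) auto
  then show ?thesis by (simp add: divide_le_eq_1 card_gt_0_iff)
qed

theorem claim6p2:
  fixes \<epsilon> :: real and d :: nat
    and A :: "('n::finite \<Rightarrow> 'a::{finite,field}) set \<Rightarrow> (('n \<Rightarrow> 'a) \<Rightarrow> 'a) \<Rightarrow> int"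
  assumes "\<epsilon> > 0"
    and "card (UNIV :: 'n set) \<ge> 3"
    and "\<exists>P \<in> affine_planes. \<exists>f \<in> low_deg d P. A P f \<noteq> 0"
    and "weak_PvP d A"
    and "\<forall>P \<in> affine_planes. real (card (supp d A P)) \<le> real (card (UNIV :: 'a set)) powr \<epsilon>"
  shows "real (card {P \<in> affine_planes. \<forall>f \<in> low_deg d P. A P f = 0}) / real (card (affine_planes :: ('n \<Rightarrow> 'a) set set))
           \<le> (real d + 3) * real (card (UNIV :: 'a set)) powr (-1 + \<epsilon>)"
proof -
  define q where "q = real (card (UNIV :: 'a set))"
  define u where "u = q powr \<epsilon>"
  have q: "2 \<le> q" unfolding q_def using card_field_ge_2 by simp
  have u: "1 \<le> u" unfolding u_def using q assms(1) by (intro ge_one_powr_ge_zero) auto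
  have "q powr (-1 + \<epsilon>) = u / q" using q by (simp add: u_def powr_diff)
  moreover have "real (card (zero_planes d A)) / real (card (affine_planes :: ('n \<Rightarrow> 'a) set set))
      \<le> (real d + 3) * (u / q)"
  proof (cases "(real d + 3) * u < q")
    case True
    obtain P0 f0 where P0: "P0 \<in> affine_planes" "f0 \<in> low_deg d P0" "A P0 f0 \<noteq> 0"
      using assms(3) by blast
    from zero_planes_fraction_le[where A = A and u = u, OF assms(4) P0] assms(5) u True
    show ?thesis unfolding q_def u_def by simp
  next
    case False
    then have "1 \<le> (real d + 3) * (u / q)" using q by (simp add: field_simps)
    then show ?thesis using zero_planes_fraction_le_1[of d A] by linarith
  qed
  ultimately show ?thesis unfolding zero_planes_def q_def by simp
qed

end
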